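(* For each natural number $n\ge 1$: (i) the total domination polynomial of the $n$-book graph $B_n$ is unimodal; (ii) the total domination polynomial of the generalized friendship graph $F_{n,4}$ is unimodal.
   Context: The $n$-book graph $B_n$ is obtained by taking $n$ copies of the cycle $C_4$ that all share one common edge $\{u,v\}$. The generalized friendship graph $F_{n,q}$ consists of $n$ cycles of length $q$ sharing exactly one common vertex; $F_{n,4}$ is the case $q=4$. For a finite simple graph $G=(V,E)$, a set $D\subseteq V$ is a total dominating set if every vertex of $V$ is adjacent to some vertex of $D$; $d_t(G,i)$ is the number of total dominating sets of size $i$, and $D_t(G,x)=\sum_{i} d_t(G,i)x^i$. A polynomial $\sum a_ix^i$ is unimodal if $a_0\le\dots\le a_k\ge a_{k+1}\ge\dots\ge a_N$ for some $k$. *)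

theory Defs
  imports Main "HOL-Computational_Algebra.Polynomial"
begin

text \<open>A graph is given by a finite vertex set V and a symmetric irreflexive
adjacency relation adj (only its restriction to V matters).\<close>

definition total_dominating :: "'a set \<Rightarrow> ('a \<Rightarrow> 'a \<Rightarrow> bool) \<Rightarrow> 'a set \<Rightarrow> bool" where
  "total_dominating V adj D \<longleftrightarrow> D \<subseteq> V \<and> (\<forall>x\<in>V. \<exists>y\<in>D. adj x y)"

definition d_t :: "'a set \<Rightarrow> ('a \<Rightarrow> 'a \<Rightarrow> bool) \<Rightarrow> nat \<Rightarrow> nat" where
  "d_t V adj i = card {D. total_dominating V adj D \<and> card D = i}"

definition total_dom_poly :: "'a set \<Rightarrow> ('a \<Rightarrow> 'a \<Rightarrow> bool) \<Rightarrow> nat poly" where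
  "total_dom_poly V adj = (\<Sum>i\<le>card V. monom (d_t V adj i) i)"

definition unimodal :: "nat poly \<Rightarrow> bool" where
  "unimodal p \<longleftrightarrow> (\<exists>k. (\<forall>i j. i \<le> j \<and> j \<le> k \<longrightarrow> coeff p i \<le> coeff p j) \<and>
                        (\<forall>i j. k \<le> i \<and> i \<le> j \<and> j \<le> degree p \<longrightarrow> coeff p j \<le> coeff p i))"

text \<open>Shared edge BU--BV; copy i of C4 is BU -- BA i -- BB i -- BV -- BU.\<close>

datatype book_vertex = BU | BV | BA nat | BB nat

definition book_verts :: "nat \<Rightarrow> book_vertex set" where
  "book_verts n = {BU, BV} \<union> BA ` {..<n} \<union> BB ` {..<n}"

fun book_edge :: "book_vertex \<Rightarrow> book_vertex \<Rightarrow> bool" where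
  "book_edge BU BV = True"
| "book_edge BU (BA i) = True"
| "book_edge (BA i) (BB j) = (i = j)"
| "book_edge (BB i) BV = True"
| "book_edge _ _ = False"

definition book_adj :: "book_vertex \<Rightarrow> book_vertex \<Rightarrow> bool" where
  "book_adj x y \<longleftrightarrow> book_edge x y \<or> book_edge y x"

text \<open>Centre FC; cycle i is FC -- FX i -- FY i -- FZ i -- FC.\<close>

datatype fr_vertex = FC | FX nat | FY nat | FZ nat

definition fr_verts :: "nat \<Rightarrow> fr_vertex set" where
  "fr_verts n = {FC} \<union> FX ` {..<n} \<union> FY ` {..<n} \<union> FZ ` {..<n}"

fun fr_edge :: "fr_vertex \<Rightarrow> fr_vertex \<Rightarrow> bool" where
  "fr_edge FC (FX i) = True"
| "fr_edge (FX i) (FY j) = (i = j)"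
| "fr_edge (FY i) (FZ j) = (i = j)"
| "fr_edge (FZ i) FC = True"
| "fr_edge _ _ = False"

definition fr_adj :: "fr_vertex \<Rightarrow> fr_vertex \<Rightarrow> bool" where
  "fr_adj x y \<longleftrightarrow> fr_edge x y \<or> fr_edge y x"

end

theory Submission
  imports Defs
begin

text \<open>Splitting a total dominating set according to its trace on the hub vertices (u and v
  for the book, the centre for the friendship graph), the choices inside the different pages
  or cycles become independent, so both polynomials are sums of powers of small polynomials:
  D_t(B_n) = x^2 (1+x)^(2n) + 2 x^(n+1) (1+x)^n + x^(2n) and
  D_t(F_{n,4}) = x^(n+1) (x+2)^n ((1+x)^n + x^(n-1)).
  For the book, binomial estimates show that the coefficients increase up to degree n+2 and
  decrease afterwards. For the friendship graph, the coefficients of (1+x)^n + x^(n-1) form a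
  PF2 sequence, multiplication by x+2 preserves this property, and PF2 sequences are unimodal.\<close>

section \<open>Generating polynomials of set families\<close>

definition card_gf :: "'a set set \<Rightarrow> nat poly" where
  "card_gf F = (\<Sum>D\<in>F. monom 1 (card D))"

lemma total_dom_poly_eq_card_gf:
  assumes "finite V"
  shows "total_dom_poly V adj = card_gf {D. total_dominating V adj D}"
proof -
  let ?T = "{D. total_dominating V adj D}"
  have sub: "?T \<subseteq> Pow V" by (auto simp: total_dominating_def)
  have fin: "finite ?T" using assms finite_subset[OF sub] by simp
  have card_le: "card ` ?T \<subseteq> {..card V}"
    using sub assms by (auto intro: card_mono)
  have "card_gf ?T = (\<Sum>i\<le>card V. \<Sum>D\<in>{D \<in> ?T. card D = i}. monom 1 i)"
    unfolding card_gf_def by (subst sum.group[OF fin _ card_le, symmetric]) (auto intro: sum.cong)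
  also have "\<dots> = (\<Sum>i\<le>card V. monom (d_t V adj i) i)"
    by (intro sum.cong refl) (simp add: d_t_def of_nat_poly smult_monom)
  finally show ?thesis by (simp add: total_dom_poly_def)
qed

lemma card_gf_image_union_product:
  assumes "finite F" "finite G" "\<forall>S\<in>F. S \<subseteq> X" "\<forall>T\<in>G. T \<subseteq> Y"
    and "X \<inter> Y = {}" "finite X" "finite Y"
  shows "card_gf ((\<lambda>(S, T). S \<union> T) ` (F \<times> G)) = card_gf F * card_gf G"
proof -
  have inj: "inj_on (\<lambda>(S, T). S \<union> T) (F \<times> G)"
  proof (rule inj_onI, clarify)
    fix S T S' T' assume "S \<in> F" "T \<in> G" "S' \<in> F" "T' \<in> G" "S \<union> T = S' \<union> T'"
    moreover from this have "S = (S \<union> T) \<inter> X" "S' = (S' \<union> T') \<inter> X"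
      "T = (S \<union> T) \<inter> Y" "T' = (S' \<union> T') \<inter> Y"
      using assms(3-5) by blast+
    ultimately show "S = S' \<and> T = T'" by metis
  qed
  have card_un: "card (S \<union> T) = card S + card T" if "S \<in> F" "T \<in> G" for S T
  proof (rule card_Un_disjoint)
    show "finite S" using that assms(3,6) by (simp add: rev_finite_subset)
    show "finite T" using that assms(4,7) by (simp add: rev_finite_subset)
    show "S \<inter> T = {}" using that assms(3-5) by blast
  qed
  have "card_gf ((\<lambda>(S, T). S \<union> T) ` (F \<times> G)) = (\<Sum>(S, T)\<in>F \<times> G. monom 1 (card S) * monom 1 (card T))"
    unfolding card_gf_def sum.reindex[OF inj]
    by (intro sum.cong refl) (auto simp: card_un mult_monom)
  also have "\<dots> = (\<Sum>S\<in>F. \<Sum>T\<in>G. monom 1 (card S) * monom 1 (card T))"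
    by (rule sum.cartesian_product[symmetric])
  also have "\<dots> = card_gf F * card_gf G"
    by (simp add: card_gf_def sum_product)
  finally show ?thesis .
qed

lemma card_gf_image_union:
  assumes "finite F" "finite E" "finite X" "\<forall>S\<in>F. S \<subseteq> X" "E \<inter> X = {}"
  shows "card_gf ((\<union>) E ` F) = monom 1 (card E) * card_gf F"
proof -
  have "(\<union>) E ` F = (\<lambda>(S, T). S \<union> T) ` ({E} \<times> F)" by auto
  then show ?thesis
    using card_gf_image_union_product[of "{E}" F E X] assms by (simp add: card_gf_def)
qed

definition block_family :: "(nat \<Rightarrow> 'a set) \<Rightarrow> (nat \<Rightarrow> 'a set \<Rightarrow> bool) \<Rightarrow> nat \<Rightarrow> 'a set set" where
  "block_family B ok n = {S. S \<subseteq> (\<Union>i<n. B i) \<and> (\<forall>i<n. ok i (S \<inter> B i))}"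

lemma finite_block_family:
  "(\<And>i. finite (B i)) \<Longrightarrow> finite (block_family B ok n)"
  unfolding block_family_def by (rule finite_subset[of _ "Pow (\<Union>i<n. B i)"]) auto

lemma block_family_Suc:
  assumes disj: "\<And>i j. i \<noteq> j \<Longrightarrow> B i \<inter> B j = {}"
  shows "block_family B ok (Suc n) =
    (\<lambda>(S, T). S \<union> T) ` (block_family B ok n \<times> {T. T \<subseteq> B n \<and> ok n T})"
proof (intro equalityI subsetI)
  fix D assume D: "D \<in> block_family B ok (Suc n)"
  have "(D - B n) \<inter> B i = D \<inter> B i" if "i < n" for i
    using disj[of i n] that by auto
  then have "D - B n \<in> block_family B ok n"
    using D by (auto simp: block_family_def lessThan_Suc)
  moreover have "D \<inter> B n \<in> {T. T \<subseteq> B n \<and> ok n T}"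
    using D by (simp add: block_family_def)
  moreover have "D = (D - B n) \<union> (D \<inter> B n)" by blast
  ultimately show "D \<in> (\<lambda>(S, T). S \<union> T) ` (block_family B ok n \<times> {T. T \<subseteq> B n \<and> ok n T})"
    by (auto intro!: image_eqI[where x = "(D - B n, D \<inter> B n)"])
next
  fix D assume "D \<in> (\<lambda>(S, T). S \<union> T) ` (block_family B ok n \<times> {T. T \<subseteq> B n \<and> ok n T})"
  then obtain S T where S: "S \<in> block_family B ok n" and T: "T \<subseteq> B n" "ok n T"
    and D: "D = S \<union> T"
    by auto
  have "S \<subseteq> (\<Union>i<n. B i)" using S by (simp add: block_family_def)
  moreover have "B i \<inter> B n = {}" if "i < n" for i using disj that by simp
  ultimately have "S \<inter> B n = {}" by blast
  then have "D \<inter> B n = T" using D T by blast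
  moreover have "D \<inter> B i = S \<inter> B i" if "i < n" for i
    using disj[of i n] that D T by auto
  moreover have "D \<subseteq> (\<Union>i<Suc n. B i)"
    using \<open>S \<subseteq> (\<Union>i<n. B i)\<close> D T by (auto simp: lessThan_Suc)
  ultimately show "D \<in> block_family B ok (Suc n)"
    using S T unfolding block_family_def by (auto simp: less_Suc_eq)
qed

lemma card_gf_block_family:
  assumes "\<And>i. finite (B i)" "\<And>i j. i \<noteq> j \<Longrightarrow> B i \<inter> B j = {}"
    and "\<And>i. card_gf {T. T \<subseteq> B i \<and> ok i T} = w"
  shows "card_gf (block_family B ok n) = w ^ n"
proof (induction n)
  case 0
  have "block_family B ok 0 = {{}}" by (auto simp: block_family_def)
  then show ?case by (simp add: card_gf_def one_pCons monom_0)
next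
  case (Suc n)
  have "B i \<inter> B n = {}" if "i < n" for i using assms(2) that by simp
  then have disj: "(\<Union>i<n. B i) \<inter> B n = {}" by blast
  have fin: "finite {T. T \<subseteq> B n \<and> ok n T}"
    using assms(1)[of n] by (simp add: rev_finite_subset[of "Pow (B n)"] subset_eq)
  have "card_gf (block_family B ok (Suc n)) =
      card_gf (block_family B ok n) * card_gf {T. T \<subseteq> B n \<and> ok n T}"
    by (subst block_family_Suc, fact assms(2),
        rule card_gf_image_union_product[where X = "\<Union>i<n. B i" and Y = "B n"])
      (simp_all add: assms(1) finite_block_family fin disj block_family_def)
  then show ?case using Suc.IH assms(3) by (simp add: mult.commute)
qed

lemma card_gf_group_by_trace:
  assumes "finite F" "finite H"
  shows "card_gf F = (\<Sum>E\<in>Pow H. card_gf {D \<in> F. D \<inter> H = E})"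
  unfolding card_gf_def using assms by (intro sum.group[symmetric]) auto

lemma hub_trace_eq_image_block_family:
  assumes "E \<subseteq> H" "\<And>i. H \<inter> B i = {}"
  shows "{D. D \<subseteq> H \<union> (\<Union>i<n. B i) \<and> D \<inter> H = E \<and> (\<forall>i<n. ok i (D \<inter> B i))} =
    (\<union>) E ` block_family B ok n"
proof (intro equalityI subsetI)
  fix D assume "D \<in> {D. D \<subseteq> H \<union> (\<Union>i<n. B i) \<and> D \<inter> H = E \<and> (\<forall>i<n. ok i (D \<inter> B i))}"
  then have D: "D \<subseteq> H \<union> (\<Union>i<n. B i)" "D \<inter> H = E" "\<forall>i<n. ok i (D \<inter> B i)" by simp_all
  have "(D - H) \<inter> B i = D \<inter> B i" for i using assms(2)[of i] by blast
  then have "D - H \<in> block_family B ok n" using D(1,3) by (auto simp: block_family_def)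
  moreover have "D = E \<union> (D - H)" using D(2) by blast
  ultimately show "D \<in> (\<union>) E ` block_family B ok n" by blast
next
  fix D assume "D \<in> (\<union>) E ` block_family B ok n"
  then obtain S where S: "S \<subseteq> (\<Union>i<n. B i)" "\<forall>i<n. ok i (S \<inter> B i)" and D: "D = E \<union> S"
    unfolding block_family_def by blast
  have "S \<inter> H = {}" using S(1) assms(2) by blast
  then have "D \<inter> H = E" using D assms(1) by blast
  moreover have "D \<inter> B i = S \<inter> B i" for i using D assms by blast
  ultimately show "D \<in> {D. D \<subseteq> H \<union> (\<Union>i<n. B i) \<and> D \<inter> H = E \<and> (\<forall>i<n. ok i (D \<inter> B i))}"
    using S D assms(1) by auto
qed

lemma card_gf_hub_blocks:
  assumes "finite H" "\<And>i. finite (B i)" "\<And>i. H \<inter> B i = {}" "\<And>i j. i \<noteq> j \<Longrightarrow> B i \<inter> B j = {}"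
    and "\<And>E i. E \<subseteq> H \<Longrightarrow> card_gf {T. T \<subseteq> B i \<and> ok E i T} = w E"
  shows "card_gf {D. D \<subseteq> H \<union> (\<Union>i<n. B i) \<and> (\<forall>i<n. ok (D \<inter> H) i (D \<inter> B i))} =
    (\<Sum>E\<in>Pow H. monom 1 (card E) * w E ^ n)"
proof -
  let ?F = "{D. D \<subseteq> H \<union> (\<Union>i<n. B i) \<and> (\<forall>i<n. ok (D \<inter> H) i (D \<inter> B i))}"
  have fin: "finite ?F"
    using assms(1,2) by (simp add: rev_finite_subset[of "Pow (H \<union> (\<Union>i<n. B i))"] subset_eq)
  have "card_gf {D \<in> ?F. D \<inter> H = E} = monom 1 (card E) * w E ^ n" if E: "E \<subseteq> H" for E
  proof -
    have "{D \<in> ?F. D \<inter> H = E} =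
        {D. D \<subseteq> H \<union> (\<Union>i<n. B i) \<and> D \<inter> H = E \<and> (\<forall>i<n. ok E i (D \<inter> B i))}"
      by auto
    also have "\<dots> = (\<union>) E ` block_family B (ok E) n"
      using E assms(3) by (rule hub_trace_eq_image_block_family)
    finally have "card_gf {D \<in> ?F. D \<inter> H = E} = card_gf ((\<union>) E ` block_family B (ok E) n)"
      by simp
    also have "\<dots> = monom 1 (card E) * card_gf (block_family B (ok E) n)"
      using E assms(1-3) by (intro card_gf_image_union[where X = "\<Union>i<n. B i"])
        (auto simp: finite_block_family block_family_def rev_finite_subset)
    finally show ?thesis
      using E assms by (simp add: card_gf_block_family)
  qed
  then show ?thesis
    using card_gf_group_by_trace[OF fin assms(1)] by simp
qed

lemma card_gf_filter:
  "finite A \<Longrightarrow> card_gf {T \<in> A. P T} = (\<Sum>T\<in>A. if P T then monom 1 (card T) else 0)"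
  unfolding card_gf_def by (rule sum.inter_filter)

lemma card_gf_subsets_doubleton:
  assumes "a \<noteq> b"
  shows "card_gf {T. T \<subseteq> {a, b} \<and> P T} =
    [:of_bool (P {}), of_bool (P {a}) + of_bool (P {b}), of_bool (P {a, b}):]"
proof -
  have "Pow {a, b} = {{}, {a}, {b}, {a, b}}" by (simp add: Pow_insert) blast
  then have "card_gf {T. T \<subseteq> {a, b} \<and> P T} = card_gf {T \<in> {{}, {a}, {b}, {a, b}}. P T}"
    by (intro arg_cong[where f = card_gf]) blast
  also have "\<dots> = (\<Sum>T\<in>{{}, {a}, {b}, {a, b}}. if P T then monom 1 (card T) else 0)"
    by (rule card_gf_filter) simp
  also have "\<dots> = [:of_bool (P {}), of_bool (P {a}) + of_bool (P {b}), of_bool (P {a, b}):]"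
    using assms by (simp add: doubleton_eq_iff monom_altdef)
  finally show ?thesis .
qed

lemma card_gf_subsets_triple:
  assumes "a \<noteq> b" "a \<noteq> c" "b \<noteq> c"
  shows "card_gf {T. T \<subseteq> {a, b, c} \<and> P T} =
    [:of_bool (P {}), of_bool (P {a}) + of_bool (P {b}) + of_bool (P {c}),
      of_bool (P {a, b}) + of_bool (P {a, c}) + of_bool (P {b, c}), of_bool (P {a, b, c}):]"
proof -
  let ?S = "{{}, {a}, {b}, {c}, {a, b}, {a, c}, {b, c}, {a, b, c}}"
  have "Pow {a, b, c} = ?S" by (simp add: Pow_insert insert_commute)
  then have "card_gf {T. T \<subseteq> {a, b, c} \<and> P T} = card_gf {T \<in> ?S. P T}"
    by (intro arg_cong[where f = card_gf]) blast
  also have "\<dots> = (\<Sum>T\<in>?S. if P T then monom 1 (card T) else 0)"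
    by (rule card_gf_filter) simp
  also have "\<dots> = [:of_bool (P {}), of_bool (P {a}) + of_bool (P {b}) + of_bool (P {c}),
      of_bool (P {a, b}) + of_bool (P {a, c}) + of_bool (P {b, c}), of_bool (P {a, b, c}):]"
    using assms by (simp add: doubleton_eq_iff insert_eq_iff monom_altdef)
  finally show ?thesis .
qed

section \<open>Unimodality and PF2 sequences\<close>

definition peaks_at :: "(nat \<Rightarrow> nat) \<Rightarrow> nat \<Rightarrow> bool" where
  "peaks_at a m \<longleftrightarrow> (\<forall>i<m. a i \<le> a (Suc i)) \<and> (\<forall>i\<ge>m. a (Suc i) \<le> a i)"

lemma unimodal_if_peaks_at:
  assumes "peaks_at (coeff p) m"
  shows "unimodal p"
  unfolding unimodal_def
proof (intro exI[of _ m] conjI allI impI)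
  fix i j assume ij: "i \<le> j \<and> j \<le> m"
  have "coeff p (min i m) \<le> coeff p (min j m)"
  proof (rule lift_Suc_mono_le[of "\<lambda>i. coeff p (min i m)"])
    show "coeff p (min k m) \<le> coeff p (min (Suc k) m)" for k
      using assms by (cases "k < m") (auto simp: peaks_at_def min_def)
  qed (use ij in auto)
  then show "coeff p i \<le> coeff p j" using ij by (simp add: min_def)
next
  fix i j assume ij: "m \<le> i \<and> i \<le> j \<and> j \<le> degree p"
  have "coeff p (max j m) \<le> coeff p (max i m)"
  proof (rule lift_Suc_antimono_le[of "\<lambda>i. coeff p (max i m)"])
    show "coeff p (max (Suc k) m) \<le> coeff p (max k m)" for k
      using assms by (cases "m \<le> k") (auto simp: peaks_at_def max_def)
  qed (use ij in auto)
  then show "coeff p j \<le> coeff p i" using ij by (auto simp: max_def split: if_splits)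
qed

lemma peaks_at_shift:
  assumes "peaks_at a m"
  shows "peaks_at (\<lambda>i. if i < k then 0 else a (i - k)) (m + k)"
  using assms unfolding peaks_at_def by (auto simp: Suc_diff_le not_less)

text \<open>Polya frequency sequences of order 2, i.e. log-concave sequences without internal zeros.\<close>

definition pf2 :: "(nat \<Rightarrow> nat) \<Rightarrow> bool" where
  "pf2 a \<longleftrightarrow> (\<forall>i j. i \<le> j \<longrightarrow> a i * a (Suc j) \<le> a (Suc i) * a j)"

lemma pf2I_log_concave:
  assumes lc: "\<And>i. a i * a (Suc (Suc i)) \<le> a (Suc i) * a (Suc i)"
    and no_gap: "\<And>k. a k = 0 \<Longrightarrow> a (Suc k) = 0"
  shows "pf2 a"
  unfolding pf2_def
proof (intro allI impI)
  fix i j :: nat assume "i \<le> j"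
  then show "a i * a (Suc j) \<le> a (Suc i) * a j"
  proof (induction j rule: dec_induct)
    case base
    then show ?case by (simp add: mult.commute)
  next
    case (step j)
    show ?case
    proof (cases "a (Suc j) = 0")
      case True
      then show ?thesis using no_gap[of "Suc j"] by simp
    next
      case False
      have "a (Suc j) * (a i * a (Suc (Suc j))) = (a i * a (Suc j)) * a (Suc (Suc j))"
        by (simp add: mult_ac)
      also have "\<dots> \<le> (a (Suc i) * a j) * a (Suc (Suc j))"
        using step.IH by (rule mult_right_mono) simp
      also have "\<dots> = a (Suc i) * (a j * a (Suc (Suc j)))" by (simp add: mult_ac)
      also have "\<dots> \<le> a (Suc i) * (a (Suc j) * a (Suc j))"
        using lc[of j] by (rule mult_left_mono) simp
      also have "\<dots> = a (Suc j) * (a (Suc i) * a (Suc j))" by (simp add: mult_ac)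
      finally show ?thesis using False by simp
    qed
  qed
qed

lemma pf2_two_step:
  assumes "pf2 a" "i \<le> j"
  shows "a i * a (Suc (Suc j)) \<le> a (Suc (Suc i)) * a j"
proof (cases "i = j")
  case False
  have "a i * a (Suc (Suc j)) \<le> a (Suc i) * a (Suc j)"
    using assms by (simp add: pf2_def)
  also have "\<dots> \<le> a (Suc (Suc i)) * a j"
    using assms False by (simp add: pf2_def)
  finally show ?thesis .
qed (simp add: mult.commute)

lemma pf2_coeff_linear_mult:
  assumes "pf2 (coeff p)"
  shows "pf2 (coeff ([:c, 1:] * p))"
proof -
  let ?a = "coeff p" and ?s = "\<lambda>k. case k of 0 \<Rightarrow> 0 | Suc k' \<Rightarrow> coeff p k'"
  have coeff_eq: "coeff ([:c, 1:] * p) k = c * ?a k + ?s k" for k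
    by (cases k) (simp_all add: coeff_pCons)
  show ?thesis
    unfolding pf2_def coeff_eq
  proof (intro allI impI)
    fix i j :: nat assume ij: "i \<le> j"
    have minor: "?a i * ?a (Suc j) \<le> ?a (Suc i) * ?a j" using assms ij by (simp add: pf2_def)
    have minor_mixed: "?s i * ?a (Suc j) \<le> ?a (Suc i) * ?s j"
    proof (cases i)
      case (Suc i')
      then obtain j' where "j = Suc j'" "i' \<le> j'" using ij by (cases j) auto
      then show ?thesis using Suc pf2_two_step[OF assms] by simp
    qed simp
    have minor_shifted: "?s i * ?a j \<le> ?a i * ?s j"
    proof (cases i)
      case (Suc i')
      then obtain j' where "j = Suc j'" "i' \<le> j'" using ij by (cases j) auto
      then show ?thesis using Suc assms by (simp add: pf2_def)
    qed simp
    have "(c * ?a i + ?s i) * (c * ?a (Suc j) + ?s (Suc j)) =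
        c * c * (?a i * ?a (Suc j)) + c * (?a i * ?a j) + c * (?s i * ?a (Suc j)) + ?s i * ?a j"
      by (simp add: algebra_simps)
    also have "\<dots> \<le> c * c * (?a (Suc i) * ?a j) + c * (?a i * ?a j) + c * (?a (Suc i) * ?s j) + ?a i * ?s j"
      using minor minor_mixed minor_shifted by (intro add_mono mult_left_mono) auto
    also have "\<dots> = (c * ?a (Suc i) + ?s (Suc i)) * (c * ?a j + ?s j)"
      by (simp add: algebra_simps)
    finally show "(c * ?a i + ?s i) * (c * ?a (Suc j) + ?s (Suc j)) \<le>
        (c * ?a (Suc i) + ?s (Suc i)) * (c * ?a j + ?s j)" .
  qed
qed

lemma pf2_peaks_at:
  assumes pf2: "pf2 a" and pos: "0 < a 0" and zero: "\<And>k. N \<le> k \<Longrightarrow> a k = 0"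
  shows "\<exists>m. peaks_at a m"
proof -
  define m where "m = (LEAST k. a (Suc k) \<le> a k)"
  have falls: "a (Suc m) \<le> a m"
    unfolding m_def by (rule LeastI[of _ N]) (simp add: zero)
  have rises: "a i < a (Suc i)" if "i < m" for i
    using not_less_Least[of i "\<lambda>k. a (Suc k) \<le> a k"] that unfolding m_def by simp
  have "0 < a m"
  proof (cases m)
    case (Suc m')
    then show ?thesis using rises[of m'] by simp
  qed (use pos in simp)
  moreover have "a m * a (Suc i) \<le> a m * a i" if "m \<le> i" for i
  proof -
    have "a m * a (Suc i) \<le> a (Suc m) * a i" using pf2 that by (simp add: pf2_def)
    also have "\<dots> \<le> a m * a i" using falls by (rule mult_right_mono) simp
    finally show ?thesis .
  qed
  ultimately show ?thesis
    using rises unfolding peaks_at_def by (auto intro: less_imp_le)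
qed

lemma pf2_coeff_linear_power_mult:
  assumes "pf2 (coeff p)"
  shows "pf2 (coeff ([:c, 1:] ^ m * p))"
  using assms
proof (induction m)
  case (Suc m)
  then show ?case
    using pf2_coeff_linear_mult[of "[:c, 1:] ^ m * p" c] by (simp only: power_Suc mult.assoc)
qed simp

lemma X_power_eq_monom: "([:0, 1:] :: 'a::comm_semiring_1 poly) ^ k = monom 1 k"
  by (simp add: monom_altdef)

lemma coeff_one_plus_X_power: "coeff ([:1, 1:] ^ m :: nat poly) k = m choose k"
proof (cases "k \<le> m")
  case True
  then show ?thesis by (simp add: coeff_linear_poly_power)
next
  case False
  have "degree ([:1, 1:] ^ m :: nat poly) \<le> m"
    using degree_power_le[of "[:1, 1:] :: nat poly" m] by simp
  then show ?thesis using False by (simp add: coeff_eq_0)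
qed

lemma Suc_times_binomial_Suc: "Suc k * (n choose Suc k) = (n - k) * (n choose k)"
  using times_binomial_minus1_eq[of "Suc k" n] binomial_absorb_comp[of n k] by simp

lemma two_times_choose_two: "2 * (n choose 2) = n * (n - 1)"
  using times_binomial_minus1_eq[of 2 n] by simp

lemma binomial_log_concave:
  "(n choose k) * (n choose Suc (Suc k)) \<le> (n choose Suc k) * (n choose Suc k)"
proof (cases "k < n")
  case True
  let ?X = "(n choose k) * (n choose Suc (Suc k))" and ?Y = "(n choose Suc k) * (n choose Suc k)"
  have "?X * (Suc (Suc k) * (n - k)) =
      ((n - k) * (n choose k)) * (Suc (Suc k) * (n choose Suc (Suc k)))"
    by (simp only: mult_ac)
  also have "\<dots> = (Suc k * (n choose Suc k)) * ((n - Suc k) * (n choose Suc k))"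
    by (simp only: Suc_times_binomial_Suc)
  also have "\<dots> = ?Y * (Suc k * (n - Suc k))"
    by (simp only: mult_ac)
  also have "\<dots> \<le> ?Y * (Suc (Suc k) * (n - k))"
    by (intro mult_left_mono mult_mono) simp_all
  finally show ?thesis using True by simp
qed (simp add: binomial_eq_0)

lemma log_concave_binomial_plus_indicator:
  fixes n :: nat
  defines "w \<equiv> \<lambda>k. (n choose k) + of_bool (k = n - 1)"
  shows "w k * w (Suc (Suc k)) \<le> w (Suc k) * w (Suc k)"
proof -
  consider "n < k + 2" | "n = k + 2" | "n = k + 3" | "k + 3 < n" by linarith
  then show ?thesis
  proof cases
    case 1
    then have "w (Suc (Suc k)) = 0" by (simp add: w_def binomial_eq_0)
    then show ?thesis by simp
  next
    case 2
    have "n choose k = n choose 2"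
      using binomial_symmetric[of k n] 2 by simp
    then have "2 * w k = n * (n - 1)"
      using 2 two_times_choose_two[of n] by (simp add: w_def)
    moreover have "n * (n - 1) \<le> (n + 1) * (n + 1)" by (intro mult_le_mono) auto
    ultimately show ?thesis using 2 by (simp add: w_def)
  next
    case 3
    let ?Y = "n choose Suc k"
    have n_choose: "n choose Suc (Suc k) = n"
      using binomial_symmetric[of "Suc (Suc k)" n] 3 by simp
    have s1: "Suc k * ?Y = 3 * (n choose k)"
      using Suc_times_binomial_Suc[of k n] 3 by simp
    have s2: "Suc (Suc k) * n = 2 * ?Y"
      using Suc_times_binomial_Suc[of "Suc k" n] 3 n_choose by simp
    have "3 * ((n choose k) * (n + 1)) = (Suc k * ?Y) * (n + 1)"
      by (simp only: s1 mult.assoc)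
    also have "\<dots> = ?Y * (Suc k * (n + 1))"
      by (simp only: mult_ac)
    also have "\<dots> \<le> ?Y * (3 * ?Y)"
    proof (rule mult_left_mono)
      have "2 * (Suc k * (n + 1)) \<le> 3 * (Suc (Suc k) * n)"
        using 3 by (simp add: algebra_simps)
      then show "Suc k * (n + 1) \<le> 3 * ?Y" using s2 by linarith
    qed simp
    finally show ?thesis using 3 n_choose by (simp add: w_def)
  next
    case 4
    then have "k \<noteq> n - 1" "Suc k \<noteq> n - 1" "Suc (Suc k) \<noteq> n - 1" by auto
    then show ?thesis using binomial_log_concave[of n k] by (simp add: w_def)
  qed
qed

lemma pf2_coeff_binomial_plus_monom:
  "pf2 (coeff ([:1, 1:] ^ n + monom 1 (n - 1) :: nat poly))"
proof -
  define w where "w k = (n choose k) + of_bool (k = n - 1)" for k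
  have "coeff ([:1, 1:] ^ n + monom 1 (n - 1)) = w"
    unfolding coeff_add coeff_one_plus_X_power coeff_monom w_def by auto
  moreover have "pf2 w"
  proof (rule pf2I_log_concave)
    show "w k * w (Suc (Suc k)) \<le> w (Suc k) * w (Suc k)" for k
      unfolding w_def by (rule log_concave_binomial_plus_indicator)
    show "w (Suc k) = 0" if "w k = 0" for k
      using that by (auto simp: w_def binomial_eq_0_iff)
  qed
  ultimately show ?thesis by simp
qed

lemma binomial_increase_imp_below_middle:
  assumes "n choose j < n choose Suc j"
  shows "2 * j + 1 < n"
proof (rule ccontr)
  assume "\<not> 2 * j + 1 < n"
  then have "n choose Suc j \<le> n choose j"
    by (cases "Suc j \<le> n") (auto intro: binomial_antimono simp: binomial_eq_0)
  with assms show False by simp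
qed

lemma binomial_mult_le_vandermonde:
  "i \<le> r \<Longrightarrow> (m choose i) * (n choose (r - i)) \<le> (m + n) choose r"
  using member_le_sum[of i "{..r}" "\<lambda>k. (m choose k) * (n choose (r - k))"] vandermonde[of m n r]
  by simp

lemma add_le_mult_choose_two:
  assumes "6 \<le> n" "1 \<le> j"
  shows "2 * (n + j) \<le> (2 * j - 1) * (n choose 2)"
proof -
  have "n * 5 \<le> n * (n - 1)" using assms(1) by (intro mult_le_mono2) simp
  moreover have "2 * (2 * n + 2) \<le> n * 5" using assms(1) by simp
  ultimately have "2 * (2 * n + 2) \<le> 2 * (n choose 2)"
    unfolding two_times_choose_two by (rule le_trans[rotated])
  then have "(2 * j - 1) * (2 * n + 2) \<le> (2 * j - 1) * (n choose 2)"
    by (intro mult_le_mono2) simp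
  moreover have "2 * (n + j) \<le> (2 * j - 1) * (2 * n + 2)"
    using assms(2) by (cases j) (auto simp: algebra_simps)
  ultimately show ?thesis by linarith
qed

text \<open>Since (n + j) C(2n, n+j) = (n - j + 1) C(2n, n+j-1), the gap between the two central
  binomials is (2j - 1)/(n + j) C(2n, n+j-1), and Vandermonde's identity bounds C(2n, n+j-1)
  from below by C(n, j+1) C(n, 2). For n < 6 only n = 4, 5 with j = 1 remain.\<close>

lemma central_binomial_gap:
  assumes j: "1 \<le> j" and increasing: "n choose j < n choose Suc j"
  shows "(2 * n choose (n + j)) + 2 * (n choose Suc j) \<le> 2 * n choose (n + j - 1)"
proof -
  have jn: "2 * j + 1 < n" using increasing by (rule binomial_increase_imp_below_middle)
  show ?thesis
  proof (cases "n \<ge> 6")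
    case True
    let ?C = "2 * n choose (n + j - 1)"
    have step: "(n + j) * (2 * n choose (n + j)) = (n - j + 1) * ?C"
      using Suc_times_binomial_Suc[of "n + j - 1" "2 * n"] j jn by (simp add: Suc_diff_le)
    have vandermonde_term: "(n choose Suc j) * (n choose 2) \<le> ?C"
      using binomial_mult_le_vandermonde[of "Suc j" "n + j - 1" n n] jn
        binomial_symmetric[of 2 n] by (simp add: mult_2 numeral_2_eq_2)
    have "2 * (n + j) \<le> (2 * j - 1) * (n choose 2)"
      using True j by (rule add_le_mult_choose_two)
    then have "(n + j) * ((2 * n choose (n + j)) + 2 * (n choose Suc j)) \<le>
        (n - j + 1) * ?C + (2 * j - 1) * ((n choose 2) * (n choose Suc j))"
      unfolding add_mult_distrib2 step by (intro add_left_mono) (simp add: mult_ac)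
    also have "\<dots> \<le> (n - j + 1) * ?C + (2 * j - 1) * ?C"
      using vandermonde_term by (intro add_left_mono mult_left_mono) (simp_all add: mult.commute)
    also have "\<dots> = ((n - j + 1) + (2 * j - 1)) * ?C"
      by (rule add_mult_distrib[symmetric])
    also have "(n - j + 1) + (2 * j - 1) = n + j"
      using j jn by simp
    finally show ?thesis using jn by simp
  next
    case False
    then have "n = 4 \<and> j = 1 \<or> n = 5 \<and> j = 1" using jn j by auto
    then show ?thesis by (auto simp: numeral_eq_Suc)
  qed
qed

section \<open>The book graph\<close>

lemma book_adj_simps:
  "book_adj BU y \<longleftrightarrow> y = BV \<or> (\<exists>i. y = BA i)"
  "book_adj BV y \<longleftrightarrow> y = BU \<or> (\<exists>i. y = BB i)"
  "book_adj (BA i) y \<longleftrightarrow> y = BU \<or> y = BB i"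
  "book_adj (BB i) y \<longleftrightarrow> y = BA i \<or> y = BV"
  by (cases y; auto simp: book_adj_def)+

definition book_page :: "nat \<Rightarrow> book_vertex set" where
  "book_page i = {BA i, BB i}"

lemma book_verts_eq: "book_verts n = {BU, BV} \<union> (\<Union>i<n. book_page i)"
  by (auto simp: book_verts_def book_page_def)

lemma book_total_dominating_iff:
  assumes "n \<ge> 1"
  shows "total_dominating (book_verts n) book_adj D \<longleftrightarrow> D \<subseteq> book_verts n \<and>
    (\<forall>i<n. (BU \<in> D \<or> BB i \<in> D) \<and> (BV \<in> D \<or> BA i \<in> D))"
proof -
  have verts: "(\<forall>x\<in>book_verts n. Q x) \<longleftrightarrow>
      Q BU \<and> Q BV \<and> (\<forall>i<n. Q (BA i)) \<and> (\<forall>i<n. Q (BB i))" for Q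
    by (auto simp: book_verts_def)
  have "(\<exists>y\<in>D. book_adj BU y) \<longleftrightarrow> BV \<in> D \<or> (\<exists>i. BA i \<in> D)"
    "(\<exists>y\<in>D. book_adj BV y) \<longleftrightarrow> BU \<in> D \<or> (\<exists>i. BB i \<in> D)"
    "(\<exists>y\<in>D. book_adj (BA i) y) \<longleftrightarrow> BU \<in> D \<or> BB i \<in> D"
    "(\<exists>y\<in>D. book_adj (BB i) y) \<longleftrightarrow> BV \<in> D \<or> BA i \<in> D" for i
    by (auto simp: book_adj_simps)
  moreover have "0 < n" using assms by simp
  ultimately show ?thesis unfolding total_dominating_def verts by blast
qed

lemma book_total_dom_poly_sum:
  assumes "n \<ge> 1"
  shows "total_dom_poly (book_verts n) book_adj =
    (\<Sum>E\<in>Pow {BU, BV}. monom 1 (card E) *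
      [:of_bool (BU \<in> E \<and> BV \<in> E), of_bool (BU \<in> E) + of_bool (BV \<in> E), 1:] ^ n)"
proof -
  have "{D. total_dominating (book_verts n) book_adj D} =
      {D. D \<subseteq> {BU, BV} \<union> (\<Union>i<n. book_page i) \<and>
        (\<forall>i<n. (BU \<in> D \<inter> {BU, BV} \<or> BB i \<in> D \<inter> book_page i) \<and>
               (BV \<in> D \<inter> {BU, BV} \<or> BA i \<in> D \<inter> book_page i))}"
    unfolding book_total_dominating_iff[OF assms] unfolding book_verts_eq by (auto simp: book_page_def)
  moreover have "card_gf \<dots> = (\<Sum>E\<in>Pow {BU, BV}. monom 1 (card E) *
      [:of_bool (BU \<in> E \<and> BV \<in> E), of_bool (BU \<in> E) + of_bool (BV \<in> E), 1:] ^ n)"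
    by (rule card_gf_hub_blocks) (auto simp: book_page_def card_gf_subsets_doubleton)
  moreover have "finite (book_verts n)" by (simp add: book_verts_def)
  ultimately show ?thesis by (simp only: total_dom_poly_eq_card_gf)
qed

lemma book_total_dom_poly:
  assumes "n \<ge> 1"
  shows "total_dom_poly (book_verts n) book_adj =
    monom 1 2 * [:1, 1:] ^ (2 * n) + 2 * (monom 1 (n + 1) * [:1, 1:] ^ n) + monom 1 (2 * n)"
proof -
  have "Pow {BU, BV} = {{}, {BU}, {BV}, {BU, BV}}" by (simp add: Pow_insert) blast
  then have "total_dom_poly (book_verts n) book_adj =
      [:0, 0, 1:] ^ n + 2 * (monom 1 1 * [:0, 1, 1:] ^ n) + monom 1 2 * [:1, 2, 1:] ^ n"
    by (simp add: book_total_dom_poly_sum[OF assms] numeral_2_eq_2 mult_2 monom_0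
        one_pCons[symmetric] add.assoc smult_1_left[where 'a = nat, unfolded One_nat_def])
  also have "[:0, 0, 1:] ^ n = (([:0, 1:] :: nat poly) ^ 2) ^ n"
    by (simp add: power2_eq_square)
  also have "\<dots> = monom 1 (2 * n)"
    by (simp only: X_power_eq_monom monom_power power_one mult.commute)
  also have "[:0, 1, 1:] ^ n = (([:0, 1:] :: nat poly) * [:1, 1:]) ^ n"
    by simp
  also have "monom 1 1 * \<dots> = monom 1 (n + 1) * [:1, 1:] ^ n"
    by (simp only: power_mult_distrib X_power_eq_monom mult.assoc[symmetric] mult_monom
        mult_1 add.commute)
  also have "[:1, 2, 1:] = ([:1, 1:] :: nat poly) ^ 2"
    by (simp add: power2_eq_square numeral_2_eq_2)
  finally show ?thesis
    by (simp only: power_mult[symmetric] ac_simps)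
qed

lemma book_coeff:
  assumes "n \<ge> 1"
  shows "coeff (total_dom_poly (book_verts n) book_adj) k =
    (if 2 \<le> k then 2 * n choose (k - 2) else 0) +
    2 * (if n + 1 \<le> k then n choose (k - (n + 1)) else 0) + of_bool (k = 2 * n)"
  unfolding book_total_dom_poly[OF assms] coeff_add mult_2 coeff_monom_mult
    coeff_one_plus_X_power coeff_monom
  by (auto simp: not_less)

lemma book_coeff_rising:
  assumes n: "n \<ge> 1" and k: "k < n + 2"
  shows "coeff (total_dom_poly (book_verts n) book_adj) k \<le>
    coeff (total_dom_poly (book_verts n) book_adj) (Suc k)"
proof (cases "k = 2 * n")
  case True
  then have "n = 1" "k = 2" using n k by auto
  then show ?thesis by (simp add: book_coeff)
next
  case False
  have "(if 2 \<le> k then 2 * n choose (k - 2) else 0) \<le>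
      (if 2 \<le> Suc k then 2 * n choose (Suc k - 2) else 0)"
    using k by (auto intro: binomial_mono)
  moreover have "(if n + 1 \<le> k then n choose (k - (n + 1)) else 0) \<le>
      (if n + 1 \<le> Suc k then n choose (Suc k - (n + 1)) else 0)"
    using n k by (cases "k = n + 1") auto
  ultimately show ?thesis unfolding book_coeff[OF n] using False by simp
qed

lemma book_coeff_falling:
  assumes n: "n \<ge> 1" and k: "n + 2 \<le> k"
  shows "coeff (total_dom_poly (book_verts n) book_adj) (Suc k) \<le>
    coeff (total_dom_poly (book_verts n) book_adj) k"
proof -
  obtain j where kj: "k = n + 1 + j" and j: "1 \<le> j"
    using k by (intro that[of "k - (n + 1)"]) auto
  have "coeff (total_dom_poly (book_verts n) book_adj) k =
      (2 * n choose (n + j - 1)) + 2 * (n choose j) + of_bool (k = 2 * n)"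
    using kj j by (simp add: book_coeff[OF n])
  moreover have "coeff (total_dom_poly (book_verts n) book_adj) (Suc k) =
      (2 * n choose (n + j)) + 2 * (n choose Suc j) + of_bool (Suc k = 2 * n)"
    using kj j by (simp add: book_coeff[OF n])
  moreover have "(2 * n choose (n + j)) + 2 * (n choose Suc j) + of_bool (Suc k = 2 * n) \<le>
      (2 * n choose (n + j - 1)) + 2 * (n choose j)"
  proof (cases "n choose Suc j \<le> n choose j")
    case True
    have "(2 * n choose (n + j)) + of_bool (Suc k = 2 * n) \<le> 2 * n choose (n + j - 1)"
    proof (cases "n + j \<le> 2 * n")
      case True
      then have "2 * n choose (n + j) < 2 * n choose (n + j - 1)"
        using j by (intro binomial_strict_antimono) auto
      then show ?thesis by simp
    next
      case False
      then show ?thesis using kj by (simp add: binomial_eq_0)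
    qed
    then show ?thesis using True by simp
  next
    case False
    then have increasing: "n choose j < n choose Suc j" by simp
    then have "Suc k \<noteq> 2 * n" using kj j binomial_increase_imp_below_middle[OF increasing] by simp
    then show ?thesis using central_binomial_gap[OF j increasing] by simp
  qed
  ultimately show ?thesis by simp
qed

lemma book_unimodal:
  assumes "n \<ge> 1"
  shows "unimodal (total_dom_poly (book_verts n) book_adj)"
  by (rule unimodal_if_peaks_at[where m = "n + 2"])
    (simp add: peaks_at_def book_coeff_rising[OF assms] book_coeff_falling[OF assms])

section \<open>The friendship graph\<close>

lemma fr_adj_simps:
  "fr_adj FC y \<longleftrightarrow> (\<exists>i. y = FX i) \<or> (\<exists>i. y = FZ i)"
  "fr_adj (FX i) y \<longleftrightarrow> y = FC \<or> y = FY i"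
  "fr_adj (FY i) y \<longleftrightarrow> y = FX i \<or> y = FZ i"
  "fr_adj (FZ i) y \<longleftrightarrow> y = FY i \<or> y = FC"
  by (cases y; auto simp: fr_adj_def)+

definition fr_cycle :: "nat \<Rightarrow> fr_vertex set" where
  "fr_cycle i = {FX i, FY i, FZ i}"

lemma fr_verts_eq: "fr_verts n = {FC} \<union> (\<Union>i<n. fr_cycle i)"
  by (auto simp: fr_verts_def fr_cycle_def)

lemma fr_total_dominating_iff:
  assumes "n \<ge> 1"
  shows "total_dominating (fr_verts n) fr_adj D \<longleftrightarrow> D \<subseteq> fr_verts n \<and>
    (\<forall>i<n. (FC \<in> D \<or> FY i \<in> D) \<and> (FX i \<in> D \<or> FZ i \<in> D))"
proof -
  have verts: "(\<forall>x\<in>fr_verts n. Q x) \<longleftrightarrow>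
      Q FC \<and> (\<forall>i<n. Q (FX i)) \<and> (\<forall>i<n. Q (FY i)) \<and> (\<forall>i<n. Q (FZ i))" for Q
    by (auto simp: fr_verts_def)
  have "(\<exists>y\<in>D. fr_adj FC y) \<longleftrightarrow> (\<exists>i. FX i \<in> D) \<or> (\<exists>i. FZ i \<in> D)"
    "(\<exists>y\<in>D. fr_adj (FX i) y) \<longleftrightarrow> FC \<in> D \<or> FY i \<in> D"
    "(\<exists>y\<in>D. fr_adj (FY i) y) \<longleftrightarrow> FX i \<in> D \<or> FZ i \<in> D"
    "(\<exists>y\<in>D. fr_adj (FZ i) y) \<longleftrightarrow> FC \<in> D \<or> FY i \<in> D" for i
    by (auto simp: fr_adj_simps)
  moreover have "0 < n" using assms by simp
  ultimately show ?thesis unfolding total_dominating_def verts by blast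
qed

lemma fr_total_dom_poly_sum:
  assumes "n \<ge> 1"
  shows "total_dom_poly (fr_verts n) fr_adj =
    (\<Sum>E\<in>Pow {FC}. monom 1 (card E) *
      [:0, 2 * of_bool (FC \<in> E), 2 + of_bool (FC \<in> E), 1:] ^ n)"
proof -
  have "{D. total_dominating (fr_verts n) fr_adj D} =
      {D. D \<subseteq> {FC} \<union> (\<Union>i<n. fr_cycle i) \<and>
        (\<forall>i<n. (FC \<in> D \<inter> {FC} \<or> FY i \<in> D \<inter> fr_cycle i) \<and>
               (FX i \<in> D \<inter> fr_cycle i \<or> FZ i \<in> D \<inter> fr_cycle i))}"
    unfolding fr_total_dominating_iff[OF assms] unfolding fr_verts_eq by (auto simp: fr_cycle_def)
  moreover have "card_gf \<dots> = (\<Sum>E\<in>Pow {FC}. monom 1 (card E) *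
      [:0, 2 * of_bool (FC \<in> E), 2 + of_bool (FC \<in> E), 1:] ^ n)"
  proof (rule card_gf_hub_blocks)
    fix E i assume "E \<subseteq> {FC}"
    then show "card_gf {T. T \<subseteq> fr_cycle i \<and> (FC \<in> E \<or> FY i \<in> T) \<and> (FX i \<in> T \<or> FZ i \<in> T)} =
        [:0, 2 * of_bool (FC \<in> E), 2 + of_bool (FC \<in> E), 1:]"
      unfolding fr_cycle_def by (subst card_gf_subsets_triple) auto
  qed (auto simp: fr_cycle_def)
  moreover have "finite (fr_verts n)" by (simp add: fr_verts_def)
  ultimately show ?thesis by (simp only: total_dom_poly_eq_card_gf)
qed

lemma fr_total_dom_poly:
  assumes "n \<ge> 1"
  shows "total_dom_poly (fr_verts n) fr_adj =
    monom 1 (n + 1) * ([:2, 1:] ^ n * ([:1, 1:] ^ n + monom 1 (n - 1)))"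
proof -
  have "Pow {FC} = {{}, {FC}}" by auto
  then have "total_dom_poly (fr_verts n) fr_adj =
      monom 1 1 * [:0, 2, 3, 1:] ^ n + [:0, 0, 2, 1:] ^ n"
    by (simp add: fr_total_dom_poly_sum[OF assms] monom_0 one_pCons[symmetric] numeral_3_eq_3
        numeral_2_eq_2 add.commute smult_1_left[where 'a = nat, unfolded One_nat_def])
  also have "[:0, 2, 3, 1:] ^ n = (([:0, 1:] :: nat poly) * ([:2, 1:] * [:1, 1:])) ^ n"
    by (simp add: numeral_3_eq_3)
  also have "monom 1 1 * \<dots> = monom 1 (n + 1) * ([:2, 1:] ^ n * [:1, 1:] ^ n)"
    by (simp only: power_mult_distrib X_power_eq_monom mult.assoc[symmetric] mult_monom
        mult_1 add.commute)
  also have "[:0, 0, 2, 1:] ^ n = (([:0, 1:] :: nat poly) ^ 2 * [:2, 1:]) ^ n"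
    by (simp add: power2_eq_square)
  also have "\<dots> = monom 1 2 ^ n * [:2, 1:] ^ n"
    by (simp only: power_mult_distrib X_power_eq_monom)
  also have "monom 1 2 ^ n = (monom 1 (n + 1) * monom 1 (n - 1) :: nat poly)"
    using assms by (simp add: monom_power mult_monom mult_2)
  finally show ?thesis
    by (simp only: distrib_left mult_ac)
qed

lemma fr_unimodal:
  assumes "n \<ge> 1"
  shows "unimodal (total_dom_poly (fr_verts n) fr_adj)"
proof -
  let ?G = "[:2, 1:] ^ n * ([:1, 1:] ^ n + monom 1 (n - 1)) :: nat poly"
  have "pf2 (coeff ?G)"
    by (intro pf2_coeff_linear_power_mult pf2_coeff_binomial_plus_monom)
  moreover have "0 < coeff ?G 0"
    by (simp add: coeff_mult_0 coeff_0_power)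
  moreover have "coeff ?G k = 0" if "Suc (degree ?G) \<le> k" for k
    using that by (simp add: coeff_eq_0)
  ultimately obtain m where "peaks_at (coeff ?G) m"
    using pf2_peaks_at by blast
  then have "peaks_at (\<lambda>i. if i < n + 1 then 0 else coeff ?G (i - (n + 1))) (m + (n + 1))"
    by (rule peaks_at_shift)
  moreover have "coeff (monom 1 (n + 1) * ?G) = (\<lambda>i. if i < n + 1 then 0 else coeff ?G (i - (n + 1)))"
    by (simp add: fun_eq_iff coeff_monom_mult)
  ultimately have "peaks_at (coeff (monom 1 (n + 1) * ?G)) (m + (n + 1))"
    by (simp only:)
  then show ?thesis
    unfolding fr_total_dom_poly[OF assms] by (rule unimodal_if_peaks_at)
qed

theorem mainTheorem10:
  fixes n :: nat
  assumes "n \<ge> 1"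
  shows "unimodal (total_dom_poly (book_verts n) book_adj) \<and>
         unimodal (total_dom_poly (fr_verts n) fr_adj)"
  using book_unimodal[OF assms] fr_unimodal[OF assms] by simp

end
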